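(* Let $n\ge 2$ and let $A$ be an $n\times n$ real matrix with spectrum $\{\lambda_1,\dots,\lambda_n\}$ (counting multiplicities). Suppose $\lambda_1$ is real and associated with a real eigenvector $v$ with no zero components, let $D=\mathrm{diag}(v)$ and $B=D^{-1}AD$. Then for every $p\in\mathbb{N}\cup\{\infty\}$, every $i=2,\dots,n$ and every $k\in\mathbb{N}$, $$|\lambda_i|\le\sqrt[k]{\tau_p(B^k)}.$$
   Context: For an $n\times n$ real matrix $M$ ($n\ge 2$) and $p\in\mathbb{N}\cup\{\infty\}$, define $$\tau_p(M)=\max\{\|M^Tx\|_p: x\in\mathbb{R}^n,\ x^Te=0,\ \|x\|_p=1\},$$ where $e$ is the all-ones vector and $\|\cdot\|_p$ is the $\ell_p$-norm. *)

theory Defs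
  imports Complex_Main "HOL-Library.Extended_Nat" "Jordan_Normal_Form.Char_Poly"
begin

text \<open>The l_p norm of a real vector, for p a positive natural number or infinity
  (p is an extended natural; the value for p = 0 is irrelevant, the theorem assumes p >= 1).\<close>
definition lp_norm :: "enat \<Rightarrow> real vec \<Rightarrow> real" where
  "lp_norm p x = (case p of
      enat q \<Rightarrow> (\<Sum>i<dim_vec x. \<bar>x $ i\<bar> powr real q) powr (1 / real q)
    | \<infinity> \<Rightarrow> Max (insert 0 {\<bar>x $ i\<bar> | i. i < dim_vec x}))"

text \<open>tau_p(M) = max { ||M^T x||_p : x^T e = 0, ||x||_p = 1 } (the maximum is attained,
  so it equals the supremum).\<close>
definition tau :: "enat \<Rightarrow> real mat \<Rightarrow> real" where
  "tau p M = Sup {lp_norm p (transpose_mat M *\<^sub>v x) | x.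
      x \<in> carrier_vec (dim_row M) \<and> (\<Sum>i<dim_vec x. x $ i) = 0 \<and> lp_norm p x = 1}"

end

theory Submission
  imports Defs
begin

text \<open>Conjugation by diag(v) turns the eigenvector v into the all-ones vector e, so B has
  constant row sums r. Deflating B along e removes the factor x - r from its characteristic
  polynomial, hence every remaining eigenvalue \<lambda> has a zero-sum complex left eigenvector y
  of B, which is also a left eigenvector of B^k for \<mu> = \<lambda>^k. The real parts of \<mu>^j y and
  of \<mu>^j (\<i> y) are real zero-sum vectors, on which each application of (B^k)^T increases the
  p-norm by a factor at most tau_p(B^k). Comparing this with the growth |\<mu>|^j of a nonzero
  coordinate of \<mu>^j y gives |\<mu>| \<le> tau_p(B^k).\<close>

lemma lp_norm_infinity:
  "lp_norm \<infinity> x = Max (insert 0 ((\<lambda>i. \<bar>x $ i\<bar>) ` {..<dim_vec x}))"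
proof -
  have "{\<bar>x $ i\<bar> | i. i < dim_vec x} = (\<lambda>i. \<bar>x $ i\<bar>) ` {..<dim_vec x}"
    by auto
  then show ?thesis by (simp add: lp_norm_def)
qed

lemma lp_norm_nonneg: "lp_norm p x \<ge> 0"
  by (cases p) (auto simp: lp_norm_def lp_norm_infinity)

lemma abs_le_lp_norm:
  assumes "p \<ge> 1" and "j < dim_vec x"
  shows "\<bar>x $ j\<bar> \<le> lp_norm p x"
proof (cases p)
  case (enat q)
  with assms(1) have "q \<ge> 1" by (simp add: one_enat_def)
  have "\<bar>x $ j\<bar> = (\<bar>x $ j\<bar> powr real q) powr (1 / real q)"
    using \<open>q \<ge> 1\<close> by (simp add: powr_powr)
  also have "\<dots> \<le> (\<Sum>i<dim_vec x. \<bar>x $ i\<bar> powr real q) powr (1 / real q)"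
    using assms(2) by (intro powr_mono2 member_le_sum) auto
  finally show ?thesis by (simp add: enat lp_norm_def)
qed (use assms(2) in \<open>auto simp: lp_norm_infinity\<close>)

lemma lp_norm_smult:
  assumes "p \<ge> 1"
  shows "lp_norm p (c \<cdot>\<^sub>v x) = \<bar>c\<bar> * lp_norm p x"
proof (cases p)
  case (enat q)
  with assms have "q \<ge> 1" by (simp add: one_enat_def)
  have "(\<Sum>i<dim_vec x. \<bar>c * x $ i\<bar> powr real q) powr (1 / real q)
      = ((\<bar>c\<bar> powr real q) * (\<Sum>i<dim_vec x. \<bar>x $ i\<bar> powr real q)) powr (1 / real q)"
    by (simp add: abs_mult powr_mult sum_distrib_left)
  also have "\<dots> = \<bar>c\<bar> * (\<Sum>i<dim_vec x. \<bar>x $ i\<bar> powr real q) powr (1 / real q)"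
    using \<open>q \<ge> 1\<close> by (simp add: powr_mult powr_powr sum_nonneg)
  finally show ?thesis by (simp add: enat lp_norm_def)
next
  case infinity
  have "mono (\<lambda>t. \<bar>c\<bar> * t)" by (simp add: mono_def mult_left_mono)
  then have "\<bar>c\<bar> * lp_norm \<infinity> x = Max ((\<lambda>t. \<bar>c\<bar> * t) ` insert 0 ((\<lambda>i. \<bar>x $ i\<bar>) ` {..<dim_vec x}))"
    unfolding lp_norm_infinity by (rule mono_Max_commute) auto
  then show ?thesis by (simp add: infinity lp_norm_infinity image_image abs_mult)
qed

lemma lp_norm_pos:
  assumes "p \<ge> 1" and "x \<noteq> 0\<^sub>v (dim_vec x)"
  shows "lp_norm p x > 0"
proof -
  obtain j where "j < dim_vec x" and "x $ j \<noteq> 0"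
    using assms(2) by (auto simp: vec_eq_iff)
  then show ?thesis
    using abs_le_lp_norm[OF assms(1)] by (meson zero_less_abs_iff less_le_trans)
qed

lemma bdd_above_lp_norm_box:
  "bdd_above (lp_norm p ` {x. dim_vec x = d \<and> (\<forall>j<d. \<bar>x $ j\<bar> \<le> m)})"
proof (cases p)
  case (enat q)
  have bound: "lp_norm p x \<le> (\<Sum>i<d. m powr real q) powr (1 / real q)"
    if "dim_vec x = d" and "\<forall>j<d. \<bar>x $ j\<bar> \<le> m" for x
  proof -
    have "(\<Sum>i<d. \<bar>x $ i\<bar> powr real q) \<le> (\<Sum>i<d. m powr real q)"
      using that by (intro sum_mono powr_mono2) auto
    then show ?thesis
      using that by (auto simp: enat lp_norm_def intro!: powr_mono2 sum_nonneg)
  qed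
  show ?thesis by (rule bdd_aboveI2, rule bound) auto
next
  case infinity
  have bound: "lp_norm p x \<le> max 0 m" if "dim_vec x = d" and "\<forall>j<d. \<bar>x $ j\<bar> \<le> m" for x
    using that by (auto simp: infinity lp_norm_infinity)
  show ?thesis by (rule bdd_aboveI2, rule bound) auto
qed

lemma tau_upper:
  assumes M: "M \<in> carrier_mat n n" and p: "p \<ge> 1" and x: "x \<in> carrier_vec n"
    and "(\<Sum>i<n. x $ i) = 0" and "lp_norm p x = 1"
  shows "lp_norm p (transpose_mat M *\<^sub>v x) \<le> tau p M"
proof -
  define m where "m = (\<Sum>j<n. \<Sum>l<n. \<bar>M $$ (l, j)\<bar>)"
  have entry_bound: "\<bar>(transpose_mat M *\<^sub>v z) $ j\<bar> \<le> m"
    if z: "z \<in> carrier_vec n" "lp_norm p z = 1" and j: "j < n" for z j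
  proof -
    have "\<bar>(transpose_mat M *\<^sub>v z) $ j\<bar> = \<bar>\<Sum>l<n. M $$ (l, j) * z $ l\<bar>"
      using M z j by (simp add: scalar_prod_def atLeast0LessThan)
    also have "\<dots> \<le> (\<Sum>l<n. \<bar>M $$ (l, j)\<bar> * \<bar>z $ l\<bar>)"
      by (rule order_trans[OF sum_abs]) (simp add: abs_mult)
    also have "\<dots> \<le> (\<Sum>l<n. \<bar>M $$ (l, j)\<bar>)"
      using abs_le_lp_norm[OF p, of _ z] z by (intro sum_mono mult_left_le) auto
    also have "\<dots> \<le> m"
      unfolding m_def using j by (intro member_le_sum) (auto intro: sum_nonneg)
    finally show ?thesis .
  qed
  let ?S = "{lp_norm p (transpose_mat M *\<^sub>v z) | z.
      z \<in> carrier_vec (dim_row M) \<and> (\<Sum>i<dim_vec z. z $ i) = 0 \<and> lp_norm p z = 1}"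
  have "lp_norm p (transpose_mat M *\<^sub>v x) \<in> ?S"
    using assms by auto
  moreover have "?S \<subseteq> lp_norm p ` {y. dim_vec y = n \<and> (\<forall>j<n. \<bar>y $ j\<bar> \<le> m)}"
    using M entry_bound by fastforce
  then have "bdd_above ?S"
    by (rule bdd_above_mono[OF bdd_above_lp_norm_box])
  ultimately show ?thesis
    unfolding tau_def by (rule cSup_upper)
qed

lemma lp_norm_transpose_mult_le_tau_mult:
  assumes M: "M \<in> carrier_mat n n" and p: "p \<ge> 1" and x: "x \<in> carrier_vec n"
    and sum0: "(\<Sum>i<n. x $ i) = 0"
  shows "lp_norm p (transpose_mat M *\<^sub>v x) \<le> tau p M * lp_norm p x"
proof (cases "x = 0\<^sub>v n")
  case True
  then have x0: "x = 0 \<cdot>\<^sub>v x" by auto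
  then have "transpose_mat M *\<^sub>v x = 0 \<cdot>\<^sub>v (transpose_mat M *\<^sub>v x)"
    by (metis M x mult_mat_vec transpose_carrier_mat)
  then have "lp_norm p (transpose_mat M *\<^sub>v x) = 0"
    by (metis lp_norm_smult[OF p] abs_zero mult_zero_left)
  moreover have "lp_norm p x = 0"
    using x0 by (metis lp_norm_smult[OF p] abs_zero mult_zero_left)
  ultimately show ?thesis by simp
next
  case False
  define c where "c = lp_norm p x"
  have "c > 0" using lp_norm_pos[OF p] False x unfolding c_def by auto
  have "lp_norm p (transpose_mat M *\<^sub>v ((1 / c) \<cdot>\<^sub>v x)) \<le> tau p M"
    using \<open>c > 0\<close> x sum0
    by (intro tau_upper[OF M p])
      (auto simp: lp_norm_smult[OF p] c_def sum_divide_distrib[symmetric])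
  moreover have "transpose_mat M *\<^sub>v ((1 / c) \<cdot>\<^sub>v x) = (1 / c) \<cdot>\<^sub>v (transpose_mat M *\<^sub>v x)"
    using M x by (intro mult_mat_vec) auto
  ultimately show ?thesis
    using \<open>c > 0\<close> by (simp add: lp_norm_smult[OF p] c_def field_simps)
qed

lemma tau_nonneg:
  assumes M: "M \<in> carrier_mat n n" and p: "p \<ge> 1" and n: "n \<ge> 2"
  shows "tau p M \<ge> 0"
proof -
  define x :: "real vec" where "x = unit_vec n 0 - unit_vec n 1"
  have "x \<in> carrier_vec n" and "(\<Sum>i<n. x $ i) = 0"
    using n by (auto simp: x_def sum_subtractf)
  moreover have "x \<noteq> 0\<^sub>v n"
    using n by (auto simp: x_def vec_eq_iff)
  then have "lp_norm p x > 0"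
    using lp_norm_pos[OF p] \<open>x \<in> carrier_vec n\<close> by auto
  ultimately have "0 \<le> tau p M * lp_norm p x"
    using lp_norm_transpose_mult_le_tau_mult[OF M p] lp_norm_nonneg order_trans by blast
  with \<open>lp_norm p x > 0\<close> show ?thesis
    by (simp add: zero_le_mult_iff)
qed

lemma le_if_powers_mult_bounded:
  fixes c d m t :: real
  assumes "c > 0" and "t \<ge> 0" and bound: "\<And>j. m ^ j * c \<le> t ^ j * d"
  shows "m \<le> t"
proof (rule ccontr)
  assume "\<not> m \<le> t"
  then have "0 \<le> t / m" "t / m < 1" and "m > 0"
    using \<open>t \<ge> 0\<close> by auto
  then have "(\<lambda>j. (t / m) ^ j * d) \<longlonglongrightarrow> 0"
    using LIMSEQ_power_zero[of "t / m"] \<open>t \<ge> 0\<close> by (intro tendsto_mult_left_zero) auto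
  then have "\<forall>\<^sub>F j in sequentially. (t / m) ^ j * d < c"
    using \<open>c > 0\<close> by (rule order_tendstoD)
  then obtain j where "(t / m) ^ j * d < c"
    by (auto simp: eventually_sequentially)
  moreover have "c \<le> (t / m) ^ j * d"
    using bound[of j] \<open>m > 0\<close> by (simp add: power_divide field_simps)
  ultimately show False by simp
qed

lemma mult_pow_mat_commute:
  assumes "A \<in> carrier_mat n n"
  shows "A * A ^\<^sub>m k = A ^\<^sub>m k * A"
proof (induction k)
  case (Suc k)
  have "A * A ^\<^sub>m Suc k = (A * A ^\<^sub>m k) * A"
    using assms by (simp add: assoc_mult_mat[of _ n n _ n _ n])
  then show ?case by (simp add: Suc.IH)
qed (use assms in auto)

lemma transpose_pow_mat:
  fixes A :: "'a :: comm_semiring_1 mat"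
  assumes "A \<in> carrier_mat n n"
  shows "transpose_mat (A ^\<^sub>m k) = transpose_mat A ^\<^sub>m k"
proof (induction k)
  case (Suc k)
  have "transpose_mat (A ^\<^sub>m Suc k) = transpose_mat A * transpose_mat (A ^\<^sub>m k)"
    using assms by (simp add: transpose_mult[of _ n n])
  also have "\<dots> = transpose_mat A * transpose_mat A ^\<^sub>m k"
    by (simp add: Suc.IH)
  also have "\<dots> = transpose_mat A ^\<^sub>m Suc k"
    using assms by (simp add: mult_pow_mat_commute[of _ n])
  finally show ?case .
qed (use assms in auto)

lemma mult_mat_vec_map_Re:
  fixes M :: "real mat" and w :: "complex vec"
  assumes "M \<in> carrier_mat nr n" and "w \<in> carrier_vec n"
  shows "M *\<^sub>v map_vec Re w = map_vec Re (map_mat complex_of_real M *\<^sub>v w)"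
  using assms by (auto simp: scalar_prod_def)

lemma lp_norm_Re_eigenvector_power:
  fixes C :: "real mat" and y :: "complex vec"
  assumes C: "C \<in> carrier_mat n n" and p: "p \<ge> 1" and "tau p C \<ge> 0"
    and y: "y \<in> carrier_vec n" and sum0: "(\<Sum>i<n. y $ i) = 0"
    and eig: "transpose_mat (map_mat complex_of_real C) *\<^sub>v y = \<mu> \<cdot>\<^sub>v y"
  shows "lp_norm p (map_vec Re (\<mu> ^ j \<cdot>\<^sub>v y)) \<le> tau p C ^ j * lp_norm p (map_vec Re y)"
proof (induction j)
  case (Suc j)
  let ?x = "map_vec Re (\<mu> ^ j \<cdot>\<^sub>v y)"
  have "transpose_mat C *\<^sub>v ?x = map_vec Re (\<mu> ^ j \<cdot>\<^sub>v (transpose_mat (map_mat complex_of_real C) *\<^sub>v y))"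
    using C y by (simp add: mult_mat_vec_map_Re[of _ n n] map_mat_transpose mult_mat_vec)
  also have "\<dots> = map_vec Re (\<mu> ^ Suc j \<cdot>\<^sub>v y)"
    by (simp add: eig smult_smult_assoc mult.commute)
  finally have step: "transpose_mat C *\<^sub>v ?x = map_vec Re (\<mu> ^ Suc j \<cdot>\<^sub>v y)" .
  have "(\<Sum>i<n. ?x $ i) = Re (\<mu> ^ j * (\<Sum>i<n. y $ i))"
    using y by (simp add: sum_distrib_left)
  then have "(\<Sum>i<n. ?x $ i) = 0"
    by (simp add: sum0)
  then have "lp_norm p (map_vec Re (\<mu> ^ Suc j \<cdot>\<^sub>v y)) \<le> tau p C * lp_norm p ?x"
    using lp_norm_transpose_mult_le_tau_mult[OF C p, of ?x] y step by auto
  also have "\<dots> \<le> tau p C * (tau p C ^ j * lp_norm p (map_vec Re y))"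
    using Suc.IH \<open>tau p C \<ge> 0\<close> by (rule mult_left_mono)
  finally show ?case by simp
qed simp

lemma cmod_power_mult_le_tau_power:
  fixes C :: "real mat" and y :: "complex vec"
  assumes C: "C \<in> carrier_mat n n" and p: "p \<ge> 1" and "tau p C \<ge> 0"
    and y: "y \<in> carrier_vec n" and sum0: "(\<Sum>i<n. y $ i) = 0"
    and eig: "transpose_mat (map_mat complex_of_real C) *\<^sub>v y = \<mu> \<cdot>\<^sub>v y"
    and j0: "j0 < n"
  shows "cmod \<mu> ^ j * cmod (y $ j0)
    \<le> tau p C ^ j * (lp_norm p (map_vec Re y) + lp_norm p (map_vec Re (\<i> \<cdot>\<^sub>v y)))"
proof -
  \<comment> \<open>Im z = - Re (\<i> z), so imaginary parts are real parts of the eigenvector \<i> y.\<close>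
  have iy: "\<i> \<cdot>\<^sub>v y \<in> carrier_vec n" "(\<Sum>i<n. (\<i> \<cdot>\<^sub>v y) $ i) = 0"
    "transpose_mat (map_mat complex_of_real C) *\<^sub>v (\<i> \<cdot>\<^sub>v y) = \<mu> \<cdot>\<^sub>v (\<i> \<cdot>\<^sub>v y)"
  proof -
    show "\<i> \<cdot>\<^sub>v y \<in> carrier_vec n" using y by simp
    show "(\<Sum>i<n. (\<i> \<cdot>\<^sub>v y) $ i) = 0"
      using y sum0 by (simp add: sum_distrib_left[symmetric])
    have "transpose_mat (map_mat complex_of_real C) *\<^sub>v (\<i> \<cdot>\<^sub>v y) = \<i> \<cdot>\<^sub>v (\<mu> \<cdot>\<^sub>v y)"
      using C y by (simp add: mult_mat_vec[of _ n n] eig)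
    then show "transpose_mat (map_mat complex_of_real C) *\<^sub>v (\<i> \<cdot>\<^sub>v y) = \<mu> \<cdot>\<^sub>v (\<i> \<cdot>\<^sub>v y)"
      by (simp add: smult_smult_assoc mult.commute[of \<i> \<mu>])
  qed
  have "(\<mu> ^ j \<cdot>\<^sub>v (\<i> \<cdot>\<^sub>v y)) $ j0 = \<i> * (\<mu> ^ j * y $ j0)"
    using y j0 by (simp add: ac_simps)
  then have Im_eq: "\<bar>Im (\<mu> ^ j * y $ j0)\<bar> = \<bar>map_vec Re (\<mu> ^ j \<cdot>\<^sub>v (\<i> \<cdot>\<^sub>v y)) $ j0\<bar>"
    using y j0 by (simp only: index_map_vec index_smult_vec dim_vec carrier_vecD Re_i_times abs_minus_cancel)
  have "cmod \<mu> ^ j * cmod (y $ j0) \<le> \<bar>Re (\<mu> ^ j * y $ j0)\<bar> + \<bar>Im (\<mu> ^ j * y $ j0)\<bar>"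
    using cmod_le[of "\<mu> ^ j * y $ j0"] by (simp only: norm_mult norm_power)
  also have "\<dots> = \<bar>map_vec Re (\<mu> ^ j \<cdot>\<^sub>v y) $ j0\<bar> + \<bar>map_vec Re (\<mu> ^ j \<cdot>\<^sub>v (\<i> \<cdot>\<^sub>v y)) $ j0\<bar>"
    using y j0 Im_eq by simp
  also have "\<dots> \<le> lp_norm p (map_vec Re (\<mu> ^ j \<cdot>\<^sub>v y)) + lp_norm p (map_vec Re (\<mu> ^ j \<cdot>\<^sub>v (\<i> \<cdot>\<^sub>v y)))"
    using y j0 by (intro add_mono abs_le_lp_norm[OF p]) auto
  also have "\<dots> \<le> tau p C ^ j * (lp_norm p (map_vec Re y) + lp_norm p (map_vec Re (\<i> \<cdot>\<^sub>v y)))"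
    using lp_norm_Re_eigenvector_power[OF C p \<open>tau p C \<ge> 0\<close>, of y \<mu> j] y sum0 eig
      lp_norm_Re_eigenvector_power[OF C p \<open>tau p C \<ge> 0\<close> iy, of j]
    by (simp add: distrib_left)
  finally show ?thesis .
qed

lemma cmod_eigenvalue_le_tau:
  fixes C :: "real mat" and y :: "complex vec"
  assumes C: "C \<in> carrier_mat n n" and p: "p \<ge> 1"
    and eigvec: "eigenvector (transpose_mat (map_mat complex_of_real C)) y \<mu>"
    and sum0: "(\<Sum>i<n. y $ i) = 0"
  shows "cmod \<mu> \<le> tau p C"
proof -
  have y: "y \<in> carrier_vec n" and "y \<noteq> 0\<^sub>v n"
    and eig: "transpose_mat (map_mat complex_of_real C) *\<^sub>v y = \<mu> \<cdot>\<^sub>v y"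
    using eigvec C by (auto simp: eigenvector_def)
  then obtain j0 where j0: "j0 < n" "y $ j0 \<noteq> 0"
    by (auto simp: vec_eq_iff)
  have "n \<ge> 2"
  proof (rule ccontr)
    assume "\<not> n \<ge> 2"
    with j0 have "n = 1" "j0 = 0" by auto
    with sum0 j0 show False by simp
  qed
  then have tau0: "tau p C \<ge> 0"
    using tau_nonneg[OF C p] by simp
  show ?thesis
    using cmod_power_mult_le_tau_power[OF C p tau0 y sum0 eig j0(1)]
    by (rule le_if_powers_mult_bounded[rotated 2]) (use j0 tau0 in simp_all)
qed

text \<open>The all-ones vector is the first column of P = ones_shear_mat n, which is otherwise the
  identity. If N has row sums r, then P^-1 N P has first column (r, 0, ..., 0) and lower right
  block deflate N.\<close>

definition ones_shear_mat :: "nat \<Rightarrow> 'a :: field mat" where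
  "ones_shear_mat n = mat n n (\<lambda>(i, j). if j = 0 \<or> i = j then 1 else 0)"

definition ones_shear_inv_mat :: "nat \<Rightarrow> 'a :: field mat" where
  "ones_shear_inv_mat n = mat n n (\<lambda>(i, j). if i = j then 1 else if j = 0 then - 1 else 0)"

definition deflate :: "'a :: comm_ring_1 mat \<Rightarrow> 'a mat" where
  "deflate N = mat (dim_row N - 1) (dim_row N - 1) (\<lambda>(i, j). N $$ (Suc i, Suc j) - N $$ (0, Suc j))"

lemma ones_shear_mat_carrier [simp]: "ones_shear_mat n \<in> carrier_mat n n"
  and ones_shear_inv_mat_carrier [simp]: "ones_shear_inv_mat n \<in> carrier_mat n n"
  by (auto simp: ones_shear_mat_def ones_shear_inv_mat_def)

lemma ones_shear_inv_mat_mult: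
  assumes M: "M \<in> carrier_mat n nc"
  shows "ones_shear_inv_mat n * M = mat n nc (\<lambda>(i, j). if i = 0 then M $$ (i, j) else M $$ (i, j) - M $$ (0, j))"
    (is "_ = ?R")
proof (rule eq_matI)
  fix i j assume "i < dim_row ?R" and "j < dim_col ?R"
  then have i: "i < n" and j: "j < nc" by auto
  have "(ones_shear_inv_mat n * M) $$ (i, j)
      = (\<Sum>l<n. (if l = i then M $$ (l, j) else 0) - (if l = 0 \<and> i \<noteq> 0 then M $$ (l, j) else 0))"
    using i j M by (auto simp: ones_shear_inv_mat_def scalar_prod_def atLeast0LessThan intro!: sum.cong)
  then show "(ones_shear_inv_mat n * M) $$ (i, j) = ?R $$ (i, j)"
    using i j by (simp add: sum_subtractf sum.delta)
qed (use M in \<open>auto simp: ones_shear_inv_mat_def\<close>)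

lemma mult_ones_shear_mat:
  assumes M: "M \<in> carrier_mat nr n"
  shows "M * ones_shear_mat n = mat nr n (\<lambda>(i, j). if j = 0 then (\<Sum>l<n. M $$ (i, l)) else M $$ (i, j))"
    (is "_ = ?R")
proof (rule eq_matI)
  fix i j assume "i < dim_row ?R" and "j < dim_col ?R"
  then have i: "i < nr" and j: "j < n" by auto
  have "(M * ones_shear_mat n) $$ (i, j) = (\<Sum>l<n. if j = 0 \<or> l = j then M $$ (i, l) else 0)"
    using i j M by (auto simp: ones_shear_mat_def scalar_prod_def atLeast0LessThan intro!: sum.cong)
  then show "(M * ones_shear_mat n) $$ (i, j) = ?R $$ (i, j)"
    using i j by (cases "j = 0") (simp_all add: sum.delta')
qed (use M in \<open>auto simp: ones_shear_mat_def\<close>)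

lemma ones_shear_mat_inverse:
  "ones_shear_inv_mat n * ones_shear_mat n = (1\<^sub>m n :: 'a :: field mat)"
  "ones_shear_mat n * ones_shear_inv_mat n = (1\<^sub>m n :: 'a :: field mat)"
proof -
  show inv: "ones_shear_inv_mat n * ones_shear_mat n = (1\<^sub>m n :: 'a mat)"
    by (subst ones_shear_inv_mat_mult[of _ n]) (auto simp: ones_shear_mat_def)
  show "ones_shear_mat n * ones_shear_inv_mat n = (1\<^sub>m n :: 'a mat)"
    by (rule mat_mult_left_right_inverse[OF _ _ inv]) auto
qed

lemma similar_mat_deflate:
  fixes N :: "'a :: field mat"
  assumes N: "N \<in> carrier_mat (Suc m) (Suc m)"
    and row_sum: "\<And>i. i < Suc m \<Longrightarrow> (\<Sum>l<Suc m. N $$ (i, l)) = r"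
  shows "similar_mat N (four_block_mat (mat 1 1 (\<lambda>_. r)) (mat 1 m (\<lambda>(_, j). N $$ (0, Suc j)))
      (0\<^sub>m m 1) (deflate N))" (is "similar_mat N ?T")
proof (rule similar_matI)
  let ?P = "ones_shear_mat (Suc m) :: 'a mat" and ?Q = "ones_shear_inv_mat (Suc m) :: 'a mat"
  have T: "?T = ?Q * (N * ?P)"
    using N row_sum
    by (auto simp: ones_shear_inv_mat_mult[of _ _ "Suc m"] mult_ones_shear_mat[OF N] deflate_def
        intro!: eq_matI)
  show "{N, ?T, ?P, ?Q} \<subseteq> carrier_mat (Suc m) (Suc m)"
    using N by (auto simp: deflate_def)
  show "?P * ?Q = 1\<^sub>m (Suc m)" and "?Q * ?P = 1\<^sub>m (Suc m)"
    by (rule ones_shear_mat_inverse)+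
  have "?P * ?T = (?P * ?Q) * (N * ?P)"
    unfolding T using N
    by (intro assoc_mult_mat[symmetric, of _ "Suc m" "Suc m" _ "Suc m" _ "Suc m"]) auto
  also have "\<dots> = N * ?P"
    using N by (simp add: ones_shear_mat_inverse)
  finally have "?P * ?T * ?Q = N * ?P * ?Q" by simp
  also have "\<dots> = N * (?P * ?Q)"
    using N by (intro assoc_mult_mat[of _ "Suc m" "Suc m" _ "Suc m" _ "Suc m"]) auto
  finally show "N = ?P * ?T * ?Q"
    using N by (simp add: ones_shear_mat_inverse)
qed

lemma char_poly_deflate:
  fixes N :: "'a :: field mat"
  assumes N: "N \<in> carrier_mat (Suc m) (Suc m)"
    and row_sum: "\<And>i. i < Suc m \<Longrightarrow> (\<Sum>l<Suc m. N $$ (i, l)) = r"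
  shows "char_poly N = [:- r, 1:] * char_poly (deflate N)"
proof -
  have "char_poly N = char_poly (four_block_mat (mat 1 1 (\<lambda>_. r))
      (mat 1 m (\<lambda>(_, j). N $$ (0, Suc j))) (0\<^sub>m m 1) (deflate N))"
    by (rule char_poly_similar[OF similar_mat_deflate[OF N row_sum]])
  also have "\<dots> = char_poly (mat 1 1 (\<lambda>_. r)) * char_poly (deflate N)"
    by (rule char_poly_four_block_zeros_col) (use N in \<open>auto simp: deflate_def\<close>)
  also have "char_poly (mat 1 1 (\<lambda>_. r)) = [:- r, 1:]"
    by (subst char_poly_upper_triangular[of _ 1]) (auto simp: upper_triangular_def diag_mat_def)
  finally show ?thesis .
qed

text \<open>deflate_lift u = Q^T (0, u), where Q is the inverse of ones_shear_mat.\<close>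

definition deflate_lift :: "'a :: comm_ring_1 vec \<Rightarrow> 'a vec" where
  "deflate_lift u = vec (Suc (dim_vec u)) (\<lambda>l. if l = 0 then - (\<Sum>i<dim_vec u. u $ i) else u $ (l - 1))"

lemma deflate_lift_carrier: "u \<in> carrier_vec m \<Longrightarrow> deflate_lift u \<in> carrier_vec (Suc m)"
  by (simp add: deflate_lift_def)

lemma sum_deflate_lift: "(\<Sum>l<Suc (dim_vec u). deflate_lift u $ l) = 0"
  by (simp only: sum.lessThan_Suc_shift) (simp add: deflate_lift_def)

lemma deflate_lift_smult: "deflate_lift (c \<cdot>\<^sub>v u) = c \<cdot>\<^sub>v deflate_lift u"
proof (rule eq_vecI)
  fix l assume "l < dim_vec (c \<cdot>\<^sub>v deflate_lift u)"
  then show "deflate_lift (c \<cdot>\<^sub>v u) $ l = (c \<cdot>\<^sub>v deflate_lift u) $ l"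
    by (cases l) (simp_all add: deflate_lift_def sum_distrib_left)
qed (simp add: deflate_lift_def)

lemma deflate_lift_eq_0_iff: "deflate_lift u = 0\<^sub>v (Suc (dim_vec u)) \<longleftrightarrow> u = 0\<^sub>v (dim_vec u)"
proof
  assume "deflate_lift u = 0\<^sub>v (Suc (dim_vec u))"
  then have "deflate_lift u $ Suc i = 0" if "i < dim_vec u" for i
    using that by simp
  then show "u = 0\<^sub>v (dim_vec u)"
    by (auto simp: deflate_lift_def)
next
  assume "u = 0\<^sub>v (dim_vec u)"
  then have "u $ i = 0" if "i < dim_vec u" for i
    using that by (metis index_zero_vec(1))
  then show "deflate_lift u = 0\<^sub>v (Suc (dim_vec u))"
    by (auto simp: deflate_lift_def)
qed

lemma transpose_mult_deflate_lift_nth: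
  assumes N: "N \<in> carrier_mat (Suc m) (Suc m)" and u: "u \<in> carrier_vec m" and j: "j < Suc m"
  shows "(transpose_mat N *\<^sub>v deflate_lift u) $ j = (\<Sum>i<m. (N $$ (Suc i, j) - N $$ (0, j)) * u $ i)"
proof -
  let ?y = "deflate_lift u"
  have "(transpose_mat N *\<^sub>v ?y) $ j = (\<Sum>l<Suc m. N $$ (l, j) * ?y $ l)"
    using N u j by (simp add: deflate_lift_def scalar_prod_def atLeast0LessThan del: sum.lessThan_Suc)
  also have "\<dots> = N $$ (0, j) * ?y $ 0 + (\<Sum>i<m. N $$ (Suc i, j) * ?y $ Suc i)"
    by (simp only: sum.lessThan_Suc_shift)
  also have "(\<Sum>i<m. N $$ (Suc i, j) * ?y $ Suc i) = (\<Sum>i<m. N $$ (Suc i, j) * u $ i)"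
    using u by (intro sum.cong) (auto simp: deflate_lift_def)
  also have "N $$ (0, j) * ?y $ 0 + (\<Sum>i<m. N $$ (Suc i, j) * u $ i)
      = (\<Sum>i<m. (N $$ (Suc i, j) - N $$ (0, j)) * u $ i)"
    using u by (simp add: deflate_lift_def sum_distrib_left sum_subtractf left_diff_distrib)
  finally show ?thesis .
qed

lemma transpose_mult_deflate_lift:
  fixes N :: "'a :: comm_ring_1 mat"
  assumes N: "N \<in> carrier_mat (Suc m) (Suc m)"
    and row_sum: "\<And>i. i < Suc m \<Longrightarrow> (\<Sum>l<Suc m. N $$ (i, l)) = r"
    and u: "u \<in> carrier_vec m"
  shows "transpose_mat N *\<^sub>v deflate_lift u = deflate_lift (transpose_mat (deflate N) *\<^sub>v u)"
proof (rule eq_vecI)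
  let ?D = "deflate N"
  have D: "?D \<in> carrier_mat m m" using N by (simp add: deflate_def)
  have Du: "(transpose_mat ?D *\<^sub>v u) $ j' = (\<Sum>i<m. ?D $$ (i, j') * u $ i)" if "j' < m" for j'
    using D u that by (simp add: scalar_prod_def atLeast0LessThan)
  fix j assume "j < dim_vec (deflate_lift (transpose_mat ?D *\<^sub>v u))"
  then have j: "j < Suc m" using D by (simp add: deflate_lift_def)
  note lhs = transpose_mult_deflate_lift_nth[OF N u j]
  show "(transpose_mat N *\<^sub>v deflate_lift u) $ j = deflate_lift (transpose_mat ?D *\<^sub>v u) $ j"
  proof (cases j)
    case 0
    have row: "N $$ (k, 0) + (\<Sum>j'<m. N $$ (k, Suc j')) = r" if "k < Suc m" for k
      using row_sum[OF that] by (simp only: sum.lessThan_Suc_shift)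
    have diff: "N $$ (Suc i, 0) - N $$ (0, 0) = - (\<Sum>j'<m. ?D $$ (i, j'))" if "i < m" for i
      using row[of "Suc i"] row[of 0] that
      by (simp add: deflate_def sum_subtractf N[THEN carrier_matD(1)] algebra_simps)
    have "(transpose_mat N *\<^sub>v deflate_lift u) $ j = (\<Sum>i<m. - (\<Sum>j'<m. ?D $$ (i, j') * u $ i))"
      unfolding lhs using 0 by (intro sum.cong) (simp_all add: diff sum_distrib_right)
    also have "\<dots> = - (\<Sum>i<m. \<Sum>j'<m. ?D $$ (i, j') * u $ i)"
      by (rule sum_negf)
    also have "\<dots> = - (\<Sum>j'<m. (transpose_mat ?D *\<^sub>v u) $ j')"
      by (subst sum.swap) (simp add: Du)
    finally show ?thesis
      using 0 D by (simp add: deflate_lift_def)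
  next
    case (Suc j')
    have "(transpose_mat N *\<^sub>v deflate_lift u) $ j = (\<Sum>i<m. ?D $$ (i, j') * u $ i)"
      unfolding lhs using j Suc
      by (intro sum.cong) (simp_all add: deflate_def N[THEN carrier_matD(1)])
    then show ?thesis
      using j Suc D Du by (simp add: deflate_lift_def)
  qed
qed (use N in \<open>simp add: deflate_lift_def deflate_def\<close>)

lemma eigenvector_transpose_deflate_lift:
  fixes N :: "'a :: comm_ring_1 mat"
  assumes N: "N \<in> carrier_mat (Suc m) (Suc m)"
    and row_sum: "\<And>i. i < Suc m \<Longrightarrow> (\<Sum>l<Suc m. N $$ (i, l)) = r"
    and u: "eigenvector (transpose_mat (deflate N)) u \<mu>"
  shows "eigenvector (transpose_mat N) (deflate_lift u) \<mu>"
proof -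
  have "deflate N \<in> carrier_mat m m" using N by (simp add: deflate_def)
  then have "u \<in> carrier_vec m" "u \<noteq> 0\<^sub>v m" "transpose_mat (deflate N) *\<^sub>v u = \<mu> \<cdot>\<^sub>v u"
    using u by (auto simp: eigenvector_def)
  then show ?thesis
    using N deflate_lift_eq_0_iff[of u]
    by (auto simp: eigenvector_def transpose_mult_deflate_lift[OF N row_sum] deflate_lift_smult
        deflate_lift_carrier)
qed

lemma zero_sum_eigenvector_transpose_exists:
  fixes N :: "'a :: field mat"
  assumes N: "N \<in> carrier_mat n n"
    and row_sum: "\<And>i. i < n \<Longrightarrow> (\<Sum>l<n. N $$ (i, l)) = r"
    and len: "length lams = n" and cp: "char_poly N = (\<Prod>mu\<leftarrow>lams. [:- mu, 1:])"
    and "lams ! 0 = r" and i: "i \<in> {1..<n}"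
  shows "\<exists>y. eigenvector (transpose_mat N) y (lams ! i) \<and> (\<Sum>l<n. y $ l) = 0"
proof -
  obtain m where n: "n = Suc m" using i by (cases n) auto
  obtain ls where lams: "lams = r # ls"
    using len \<open>lams ! 0 = r\<close> n by (cases lams) auto
  have D: "deflate N \<in> carrier_mat m m" using N n by (simp add: deflate_def)
  have "[:- r, 1:] * char_poly (deflate N) = [:- r, 1:] * (\<Prod>mu\<leftarrow>ls. [:- mu, 1:])"
    using char_poly_deflate[of N m r] N row_sum cp lams n by simp
  moreover have "[:- r, 1:] \<noteq> (0 :: 'a poly)"
    by simp
  ultimately have "char_poly (deflate N) = (\<Prod>mu\<leftarrow>ls. [:- mu, 1:])"
    using mult_left_cancel by blast
  moreover have "lams ! i \<in> set ls"
    using i len lams n by (cases i) auto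
  ultimately have "poly (char_poly (transpose_mat (deflate N))) (lams ! i) = 0"
    using D by (auto simp: poly_prod_list prod_list_zero_iff)
  then have "eigenvalue (transpose_mat (deflate N)) (lams ! i)"
    using eigenvalue_root_char_poly[of "transpose_mat (deflate N)" m] D by simp
  then obtain u where u: "eigenvector (transpose_mat (deflate N)) u (lams ! i)"
    by (auto simp: eigenvalue_def)
  then have "dim_vec u = m"
    using D by (simp add: eigenvector_def)
  then show ?thesis
    using eigenvector_transpose_deflate_lift[of N m r, OF _ _ u] sum_deflate_lift[of u] N row_sum n
    by auto
qed

lemma diag_conj_mat:
  fixes A :: "'a :: field mat"
  assumes A: "A \<in> carrier_mat n n"
  shows "mat_diag n (\<lambda>j. 1 / d j) * A * mat_diag n d = mat n n (\<lambda>(i, j). A $$ (i, j) * d j / d i)"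
  using A by (auto simp: mat_diag_mult_left mat_diag_mult_right[of _ n n] intro!: eq_matI)

lemma similar_mat_diag_conj:
  fixes A :: "'a :: field mat"
  assumes A: "A \<in> carrier_mat n n" and d: "\<And>i. i < n \<Longrightarrow> d i \<noteq> 0"
  shows "similar_mat A (mat_diag n (\<lambda>j. 1 / d j) * A * mat_diag n d)"
proof (rule similar_matI)
  let ?B = "mat_diag n (\<lambda>j. 1 / d j) * A * mat_diag n d"
  show "{A, ?B, mat_diag n d, mat_diag n (\<lambda>j. 1 / d j)} \<subseteq> carrier_mat n n"
    using A by (auto intro!: mult_carrier_mat[of _ n n])
  show "mat_diag n d * mat_diag n (\<lambda>j. 1 / d j) = 1\<^sub>m n"
    and "mat_diag n (\<lambda>j. 1 / d j) * mat_diag n d = 1\<^sub>m n"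
    unfolding mat_diag_diag using d by (auto simp: mat_diag_def intro!: eq_matI)
  have "mat_diag n d * ?B = mat n n (\<lambda>(i, j). A $$ (i, j) * d j)"
    unfolding diag_conj_mat[OF A] using d
    by (subst mat_diag_mult_left[of _ n n]) (auto intro!: eq_matI)
  then have "mat_diag n d * ?B * mat_diag n (\<lambda>j. 1 / d j)
      = mat n n (\<lambda>(i, j). A $$ (i, j) * d j) * mat_diag n (\<lambda>j. 1 / d j)"
    by simp
  also have "\<dots> = A"
    using A d by (subst mat_diag_mult_right[of _ n n]) (auto intro!: eq_matI)
  finally show "A = mat_diag n d * ?B * mat_diag n (\<lambda>j. 1 / d j)" ..
qed

lemma row_sum_diag_conj_eigenvector:
  fixes A :: "'a :: field mat"
  assumes A: "A \<in> carrier_mat n n" and v: "v \<in> carrier_vec n"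
    and Av: "A *\<^sub>v v = r \<cdot>\<^sub>v v" and "v $ i \<noteq> 0" and "i < n"
  shows "(\<Sum>l<n. (mat_diag n (\<lambda>j. 1 / v $ j) * A * mat_diag n (\<lambda>j. v $ j)) $$ (i, l)) = r"
proof -
  have "(\<Sum>l<n. A $$ (i, l) * v $ l) = r * v $ i"
    using arg_cong[OF Av, of "\<lambda>w. w $ i"] A v \<open>i < n\<close>
    by (simp add: scalar_prod_def atLeast0LessThan)
  then show ?thesis
    using A \<open>v $ i \<noteq> 0\<close> \<open>i < n\<close> by (simp add: diag_conj_mat sum_divide_distrib[symmetric])
qed

lemma eigenvector_pow_mat:
  assumes "A \<in> carrier_mat n n" and "eigenvector A v \<mu>"
  shows "eigenvector (A ^\<^sub>m k) v (\<mu> ^ k)"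
  using eigenvector_pow[OF assms] assms by (auto simp: eigenvector_def)

lemma zero_sum_left_eigenvector_diag_conj:
  fixes A :: "real mat" and lams :: "complex list"
  assumes A: "A \<in> carrier_mat n n" and len: "length lams = n"
    and cp: "char_poly (map_mat complex_of_real A) = (\<Prod>mu\<leftarrow>lams. [:- mu, 1:])"
    and "lams ! 0 = complex_of_real r" and v: "v \<in> carrier_vec n"
    and Av: "A *\<^sub>v v = r \<cdot>\<^sub>v v" and v0: "\<forall>i<n. v $ i \<noteq> 0" and i: "i \<in> {1..<n}"
  defines "B \<equiv> mat_diag n (\<lambda>j. 1 / v $ j) * A * mat_diag n (\<lambda>j. v $ j)"
  shows "\<exists>y. eigenvector (transpose_mat (map_mat complex_of_real B)) y (lams ! i)
    \<and> (\<Sum>l<n. y $ l) = 0"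
proof -
  define N where "N = map_mat complex_of_real B"
  have B: "B \<in> carrier_mat n n" and N: "N \<in> carrier_mat n n"
    using A by (auto simp: B_def N_def intro!: mult_carrier_mat[of _ n n])
  have row_sum: "(\<Sum>l<n. N $$ (j, l)) = complex_of_real r" if "j < n" for j
    using row_sum_diag_conj_eigenvector[OF A v Av] v0 B that
    by (simp flip: B_def of_real_sum add: N_def)
  have "similar_mat A B"
    unfolding B_def using similar_mat_diag_conj[OF A, of "\<lambda>j. v $ j"] v0 by simp
  then have "char_poly B = char_poly A"
    by (simp add: char_poly_similar)
  have "char_poly N = map_poly complex_of_real (char_poly B)"
    unfolding N_def by (rule of_real_hom.char_poly_hom[OF B])
  also have "\<dots> = char_poly (map_mat complex_of_real A)"
    using \<open>char_poly B = char_poly A\<close> by (simp add: of_real_hom.char_poly_hom[OF A])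
  finally have "char_poly N = (\<Prod>mu\<leftarrow>lams. [:- mu, 1:])"
    using cp by simp
  then show ?thesis
    using zero_sum_eigenvector_transpose_exists[OF N row_sum len _ \<open>lams ! 0 = complex_of_real r\<close> i]
    by (simp add: N_def)
qed

theorem corollary3:
  fixes n :: nat and A :: "real mat" and lams :: "complex list"
    and r :: real and v :: "real vec"
  assumes "n \<ge> 2"
    and "A \<in> carrier_mat n n"
    and "length lams = n"
    and "char_poly (map_mat complex_of_real A) = (\<Prod>mu\<leftarrow>lams. [:- mu, 1:])"
    and "lams ! 0 = complex_of_real r"
    and "v \<in> carrier_vec n"
    and "A *\<^sub>v v = r \<cdot>\<^sub>v v"
    and "\<forall>i<n. v $ i \<noteq> 0"
  shows "\<forall>p::enat. p \<ge> 1 \<longrightarrow> (\<forall>i\<in>{1..<n}. \<forall>k::nat. k \<ge> 1 \<longrightarrow>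
           cmod (lams ! i) \<le> root k (tau p
              ((mat_diag n (\<lambda>j. 1 / v $ j) * A * mat_diag n (\<lambda>j. v $ j)) ^\<^sub>m k)))"
proof (intro allI impI ballI)
  fix p :: enat and i k :: nat
  assume p: "p \<ge> 1" and i: "i \<in> {1..<n}" and "k \<ge> 1"
  define B where "B = mat_diag n (\<lambda>j. 1 / v $ j) * A * mat_diag n (\<lambda>j. v $ j)"
  have B: "B \<in> carrier_mat n n"
    using assms(2) by (auto simp: B_def intro!: mult_carrier_mat[of _ n n])
  obtain y where y: "eigenvector (transpose_mat (map_mat complex_of_real B)) y (lams ! i)"
    and sum0: "(\<Sum>l<n. y $ l) = 0"
    using zero_sum_left_eigenvector_diag_conj[OF assms(2-8) i] unfolding B_def by blast
  then have "eigenvector (transpose_mat (map_mat complex_of_real (B ^\<^sub>m k))) y (lams ! i ^ k)"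
    using eigenvector_pow_mat[of "transpose_mat (map_mat complex_of_real B)" n] B
    by (simp add: of_real_hom.mat_hom_pow transpose_pow_mat)
  then have "cmod (lams ! i ^ k) \<le> tau p (B ^\<^sub>m k)"
    by (rule cmod_eigenvalue_le_tau[OF pow_carrier_mat[OF B] p _ sum0])
  then have "cmod (lams ! i) ^ k \<le> tau p (B ^\<^sub>m k)"
    by (simp add: norm_power)
  then show "cmod (lams ! i) \<le> root k (tau p (B ^\<^sub>m k))"
    using \<open>k \<ge> 1\<close> real_root_le_mono[of k] by (fastforce simp: real_root_power_cancel)
qed

end
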